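(* Consider the family $Z\in\mathfrak X_S$ of the setup under the resonance condition $A=-2C$, i.e. the real eigenvalue of $DX$ equals minus twice the real part of its complex eigenvalues. Then there exist parameter values $(C,H,\Lambda)$ for which $Z$ admits at least one symmetric limit cycle. Here a symmetric limit cycle is an isolated crossing periodic orbit $\gamma$ with $S(\gamma)=\gamma$.
   Context: Setup. Fix real parameters $A\neq 0$, $C$, $H$, $\Lambda$. Let $\Sigma=\{z=0\}$, $\Sigma^+=\{z\ge0\}$ and $\Sigma^-=\{z<0\}$. Define $$X(x,y,z)=\big(Ax-H(((A-C)^2+1)z-\Lambda),\ \Lambda-(1+C^2)z,\ y+2Cz\big),$$ $$Y(x,y,z)=\big(-\Lambda-(1+C^2)z,\ Ay-H(((A-C)^2+1)z+\Lambda),\ x+2Cz\big).$$ $Z$ equals $X$ on $\Sigma^+$ and $Y$ on $\Sigma^-$; this family is denoted $\mathfrak X_S$. The matrices $DX$ and $DY$ have eigenvalues $A$ and $C\pm i$. The involution is $S(x,y,z)=(-y,-x,-z)$. A crossing periodic orbit is a periodic orbit of $Z$ made of an arc of $X$ in $\Sigma^+$ from $p_0\in\Sigma$ to $p_1\in\Sigma$, followed by an arc of $Y$ in $\Sigma^-$ from $p_1$ back to $p_0$. Both crossings are transversal, i.e. $X_3Y_3>0$ at $p_0$ and at $p_1$, where $X_3(x,y,0)=y$ and $Y_3(x,y,0)=x$. *)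

theory Defs
  imports "HOL-Analysis.Analysis"
begin

type_synonym pt = "real \<times> real \<times> real"

definition fX :: "real \<Rightarrow> real \<Rightarrow> real \<Rightarrow> real \<Rightarrow> pt \<Rightarrow> pt" where
  "fX A C H \<Lambda> p = (case p of (x, y, z) \<Rightarrow>
     (A * x - H * (((A - C)^2 + 1) * z - \<Lambda>), \<Lambda> - (1 + C^2) * z, y + 2 * C * z))"

definition fY :: "real \<Rightarrow> real \<Rightarrow> real \<Rightarrow> real \<Rightarrow> pt \<Rightarrow> pt" where
  "fY A C H \<Lambda> p = (case p of (x, y, z) \<Rightarrow>
     (- \<Lambda> - (1 + C^2) * z, A * y - H * (((A - C)^2 + 1) * z + \<Lambda>), x + 2 * C * z))"

definition zc :: "pt \<Rightarrow> real" where "zc p = snd (snd p)"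

definition Sinv :: "pt \<Rightarrow> pt" where
  "Sinv p = (case p of (x, y, z) \<Rightarrow> (- y, - x, - z))"

definition transversal :: "real \<Rightarrow> real \<Rightarrow> real \<Rightarrow> real \<Rightarrow> pt \<Rightarrow> bool" where
  "transversal A C H \<Lambda> p \<longleftrightarrow> zc p = 0 \<and>
     zc (fX A C H \<Lambda> p) * zc (fY A C H \<Lambda> p) > 0"

definition crossing_periodic_orbit :: "real \<Rightarrow> real \<Rightarrow> real \<Rightarrow> real \<Rightarrow> pt set \<Rightarrow> bool" where
  "crossing_periodic_orbit A C H \<Lambda> \<gamma> \<longleftrightarrow>
    (\<exists>p0 p1 t1 t2 \<phi> \<psi>. t1 > 0 \<and> t2 > 0 \<and>
       \<phi> 0 = p0 \<and> \<phi> t1 = p1 \<and> \<psi> 0 = p1 \<and> \<psi> t2 = p0 \<and>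
       (\<forall>t\<in>{0..t1}. (\<phi> has_vector_derivative fX A C H \<Lambda> (\<phi> t)) (at t within {0..t1})) \<and>
       (\<forall>t\<in>{0..t2}. (\<psi> has_vector_derivative fY A C H \<Lambda> (\<psi> t)) (at t within {0..t2})) \<and>
       (\<forall>t\<in>{0..t1}. zc (\<phi> t) \<ge> 0) \<and>
       (\<forall>t\<in>{0<..<t2}. zc (\<psi> t) < 0) \<and>
       transversal A C H \<Lambda> p0 \<and> transversal A C H \<Lambda> p1 \<and>
       \<gamma> = \<phi> ` {0..t1} \<union> \<psi> ` {0..t2})"

definition limit_cycle :: "real \<Rightarrow> real \<Rightarrow> real \<Rightarrow> real \<Rightarrow> pt set \<Rightarrow> bool" where
  "limit_cycle A C H \<Lambda> \<gamma> \<longleftrightarrow> crossing_periodic_orbit A C H \<Lambda> \<gamma> \<and>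
    (\<exists>\<epsilon>>0. \<forall>\<gamma>'. crossing_periodic_orbit A C H \<Lambda> \<gamma>' \<and> (\<forall>q\<in>\<gamma>'. infdist q \<gamma> < \<epsilon>)
       \<longrightarrow> \<gamma>' = \<gamma>)"

definition symmetric_limit_cycle :: "real \<Rightarrow> real \<Rightarrow> real \<Rightarrow> real \<Rightarrow> pt set \<Rightarrow> bool" where
  "symmetric_limit_cycle A C H \<Lambda> \<gamma> \<longleftrightarrow> limit_cycle A C H \<Lambda> \<gamma> \<and> Sinv ` \<gamma> = \<gamma>"

end

theory Submission
  imports Defs
begin

text \<open>An X-arc leaving \<open>\<Sigma>\<close> at \<open>(a, b, 0)\<close> can be written down explicitly: it returns to
  \<open>\<Sigma>\<close> after time \<open>t \<in> (0, \<pi>)\<close> exactly when \<open>b = b_of t\<close>, arriving at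
  \<open>(exp (-2 C t) a + H x_drift t, - a_of t, 0)\<close>. Since \<open>S\<close> conjugates \<open>Y\<close> to \<open>X\<close>,
  the Y-arc of a crossing periodic orbit is the \<open>S\<close>-image of an X-arc, so crossing periodic orbits
  correspond to pairs of flight times \<open>(t1, t2)\<close> with \<open>closing t1 t2 = closing t2 t1 = 0\<close>, and
  \<open>S\<close> exchanges the orbits of \<open>(t1, t2)\<close> and \<open>(t2, t1)\<close>. For \<open>exp (C \<pi>/2) = 2\<close> and a
  suitable \<open>H\<close> the pair \<open>(\<pi>/2, \<pi>/2)\<close> is a solution, giving an \<open>S\<close>-invariant orbit. Near
  it the partial derivatives of \<open>closing\<close> satisfy \<open>\<partial>\<^sub>1 < \<partial>\<^sub>2\<close> and \<open>\<partial>\<^sub>1 + \<partial>\<^sub>2 \<noteq> 0\<close>,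
  so by Rolle's theorem no other solution is nearby; as \<open>b_of\<close> is strictly increasing, orbits
  close to the symmetric one have flight times close to \<open>\<pi>/2\<close>, hence it is isolated.\<close>

lemma bounded_linear_inner_le:
  fixes L :: "'a::real_inner \<Rightarrow> 'a"
  assumes "bounded_linear L"
  obtains K where "\<And>v. inner v (L v) \<le> K * inner v v"
proof -
  obtain K where K: "\<And>v. norm (L v) \<le> norm v * K"
    using bounded_linear.bounded[OF assms] by blast
  have "inner v (L v) \<le> K * inner v v" for v
  proof -
    have "inner v (L v) \<le> norm v * norm (L v)" by (rule norm_cauchy_schwarz)
    also have "\<dots> \<le> norm v * (norm v * K)" by (rule mult_left_mono[OF K norm_ge_zero])
    finally show ?thesis
      by (simp add: power2_norm_eq_inner[symmetric] power2_eq_square algebra_simps)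
  qed
  then show thesis by (rule that)
qed

lemma linear_ode_zero:
  fixes w :: "real \<Rightarrow> 'a::real_inner" and L :: "'a \<Rightarrow> 'a"
  assumes L: "bounded_linear L" and w0: "w 0 = 0"
    and w': "\<And>t. t \<in> {0..T} \<Longrightarrow> (w has_vector_derivative L (w t)) (at t within {0..T})"
    and t: "t \<in> {0..T}"
  shows "w t = 0"
proof -
  obtain K where growth: "\<And>v. inner v (L v) \<le> K * inner v v"
    using bounded_linear_inner_le[OF L] by blast
  \<comment> \<open>Gronwall: the weighted energy \<open>V\<close> is non-increasing and starts at \<open>0\<close>.\<close>
  define V where "V t = exp (-(2*K*t)) * inner (w t) (w t)" for t
  have V': "(V has_real_derivative
      exp (-(2*K*t)) * (2 * inner (w t) (L (w t)) - 2*K*inner (w t) (w t))) (at t within {0..T})"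
    if "t \<in> {0..T}" for t
  proof -
    have "(w has_derivative (\<lambda>h. h *\<^sub>R L (w t))) (at t within {0..T})"
      using w'[OF that] by (simp add: has_vector_derivative_def)
    from has_derivative_inner[OF this this]
    have "((\<lambda>t. inner (w t) (w t)) has_real_derivative 2 * inner (w t) (L (w t)))
        (at t within {0..T})"
      unfolding has_field_derivative_def
      by (rule has_derivative_eq_rhs) (auto simp: fun_eq_iff inner_commute algebra_simps)
    then show ?thesis unfolding V_def
      by (auto intro!: derivative_eq_intros simp: algebra_simps)
  qed
  have "continuous_on {0..T} V"
    using V' by (meson has_field_derivative_imp_has_derivative has_derivative_continuous
        continuous_on_eq_continuous_within)
  have "V t \<le> V 0"
  proof (rule DERIV_nonpos_imp_decreasing_open[of 0 t V])
    show "continuous_on {0..t} V"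
      using t by (intro continuous_on_subset[OF \<open>continuous_on {0..T} V\<close>]) auto
    fix x assume x: "0 < x" "x < t"
    then have "at x within {0..T} = at x" using t by (intro at_within_Icc_at) auto
    moreover have "exp (-(2*K*x)) * (2 * inner (w x) (L (w x)) - 2*K*inner (w x) (w x)) \<le> 0"
      using growth[of "w x"] by (intro mult_nonneg_nonpos) auto
    ultimately show "\<exists>y. DERIV V x :> y \<and> y \<le> 0" using V'[of x] x t by auto
  qed (use t in auto)
  then have "inner (w t) (w t) \<le> 0" using w0 by (simp add: V_def mult_le_0_iff)
  then show ?thesis by (metis inner_eq_zero_iff inner_ge_zero order.antisym)
qed

lemma affine_ode_unique:
  fixes \<phi> \<psi> :: "real \<Rightarrow> 'a::real_inner"
  assumes lin: "bounded_linear (\<lambda>v. F v - F 0)" and init: "\<phi> 0 = \<psi> 0"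
    and \<phi>': "\<And>t. t \<in> {0..T} \<Longrightarrow> (\<phi> has_vector_derivative F (\<phi> t)) (at t within {0..T})"
    and \<psi>': "\<And>t. t \<in> {0..T} \<Longrightarrow> (\<psi> has_vector_derivative F (\<psi> t)) (at t within {0..T})"
    and t: "t \<in> {0..T}"
  shows "\<phi> t = \<psi> t"
proof -
  have "F p - F q = F (p - q) - F 0" for p q
    using linear_diff[OF bounded_linear.linear[OF lin], of p q] by simp
  then have "((\<lambda>t. \<phi> t - \<psi> t) has_vector_derivative F (\<phi> s - \<psi> s) - F 0) (at s within {0..T})"
    if "s \<in> {0..T}" for s
    using has_vector_derivative_diff[OF \<phi>'[OF that] \<psi>'[OF that]] by simp
  from linear_ode_zero[OF lin _ this t] show ?thesis using init by simp
qed

lemma convex_segment_mem: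
  fixes I :: "real set"
  assumes "convex I" "a \<in> I" "a + d \<in> I" "l \<in> {0..1}"
  shows "a + l*d \<in> I"
  using convexD_alt[OF assms(1-3), of l] assms(4) by (simp add: algebra_simps)

lemma Rolle_segment:
  fixes E Eu Ev :: "real \<Rightarrow> real \<Rightarrow> real"
  assumes I: "convex I"
    and E': "\<And>u v. u \<in> I \<Longrightarrow> v \<in> I \<Longrightarrow>
      ((\<lambda>(u, v). E u v) has_derivative (\<lambda>(h, k). Eu u v * h + Ev u v * k)) (at (u, v))"
    and ends: "u \<in> I" "v \<in> I" "u + du \<in> I" "v + dv \<in> I" and eq: "E u v = E (u + du) (v + dv)"
  obtains l where "l \<in> {0<..<1}" "Eu (u + l*du) (v + l*dv) * du + Ev (u + l*du) (v + l*dv) * dv = 0"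
proof -
  define f where "f l = E (u + l*du) (v + l*dv)" for l
  define D where "D l = Eu (u + l*du) (v + l*dv) * du + Ev (u + l*du) (v + l*dv) * dv" for l
  have f': "(f has_derivative (\<lambda>h. h * D l)) (at l)" if "l \<in> {0..1}" for l
  proof -
    have "((\<lambda>l. (u + l*du, v + l*dv)) has_derivative (\<lambda>h. (h*du, h*dv))) (at l)"
      by (auto intro!: derivative_eq_intros)
    from has_derivative_compose[OF this E'[OF convex_segment_mem[OF I ends(1,3) that]
          convex_segment_mem[OF I ends(2,4) that]]]
    have "((\<lambda>l. E (u + l*du) (v + l*dv)) has_derivative
        (\<lambda>h. Eu (u + l*du) (v + l*dv) * (h*du) + Ev (u + l*du) (v + l*dv) * (h*dv))) (at l)"
      by simp
    then show ?thesis
      unfolding f_def D_def by (rule has_derivative_eq_rhs) (simp add: fun_eq_iff algebra_simps)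
  qed
  have "continuous_on {0..1} f"
    using f' by (meson continuous_at_imp_continuous_on has_derivative_continuous)
  moreover have "f 0 = f 1" using eq by (simp add: f_def)
  ultimately have "\<exists>l. 0 < l \<and> l < 1 \<and> (\<lambda>h. h * D l) = (\<lambda>h. 0)"
    by (intro Rolle_deriv) (auto intro: f')
  then obtain l where "l \<in> {0<..<1}" "(\<lambda>h. h * D l) = (\<lambda>h. 0)" by auto
  moreover from this(2) have "D l = 0" by (metis mult_1)
  ultimately show thesis using that by (auto simp: D_def)
qed

text \<open>Along the segment from \<open>(t, s)\<close> to \<open>(s, t)\<close> the derivative of \<open>E\<close> is
  \<open>(t - s) (Ev - Eu)\<close>, so Rolle's theorem forces \<open>s = t\<close>; along the diagonal from \<open>(T, T)\<close> to
  \<open>(s, s)\<close> it is \<open>(s - T) (Eu + Ev)\<close>, forcing \<open>s = T\<close>.\<close>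
lemma swapped_zeros_unique:
  fixes E Eu Ev :: "real \<Rightarrow> real \<Rightarrow> real"
  assumes I: "convex I"
    and E': "\<And>u v. u \<in> I \<Longrightarrow> v \<in> I \<Longrightarrow>
      ((\<lambda>(u, v). E u v) has_derivative (\<lambda>(h, k). Eu u v * h + Ev u v * k)) (at (u, v))"
    and cross: "\<And>u v. u \<in> I \<Longrightarrow> v \<in> I \<Longrightarrow> Eu u v < Ev u v"
    and diag: "\<And>u. u \<in> I \<Longrightarrow> Eu u u + Ev u u \<noteq> 0"
    and in_I: "s \<in> I" "t \<in> I" "T \<in> I"
    and zeros: "E s t = 0" "E t s = 0" "E T T = 0"
  shows "s = T \<and> t = T"
proof -
  have "s = t"
  proof -
    obtain l where l: "l \<in> {0<..<1}"
      and "Eu (t + l*(s - t)) (s + l*(t - s)) * (s - t)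
        + Ev (t + l*(s - t)) (s + l*(t - s)) * (t - s) = 0"
      using Rolle_segment[OF I E', of t s "s - t" "t - s"] in_I zeros by auto
    moreover define x y where "x = t + l*(s - t)" and "y = s + l*(t - s)"
    ultimately have "Eu x y * (s - t) + Ev x y * (t - s) = 0" by simp
    then have "(t - s) * (Ev x y - Eu x y) = 0" by (simp add: algebra_simps)
    moreover have "Eu x y < Ev x y"
      unfolding x_def y_def using convex_segment_mem[OF I, of t "s - t" l]
        convex_segment_mem[OF I, of s "t - s" l] in_I l by (intro cross) auto
    ultimately show ?thesis by simp
  qed
  moreover have "s = T"
  proof -
    obtain l where l: "l \<in> {0<..<1}"
      and "Eu (T + l*(s - T)) (T + l*(s - T)) * (s - T)
        + Ev (T + l*(s - T)) (T + l*(s - T)) * (s - T) = 0"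
      using Rolle_segment[OF I E', of T T "s - T" "s - T"] in_I zeros \<open>s = t\<close> by auto
    moreover define x where "x = T + l*(s - T)"
    ultimately have "Eu x x * (s - T) + Ev x x * (s - T) = 0" by simp
    then have "(s - T) * (Eu x x + Ev x x) = 0" by (simp add: algebra_simps)
    moreover have "Eu x x + Ev x x \<noteq> 0"
      unfolding x_def using convex_segment_mem[OF I, of T "s - T" l] in_I l by (intro diag) auto
    ultimately show ?thesis by simp
  qed
  ultimately show ?thesis by simp
qed

lemma strict_mono_on_local_inverse:
  fixes f :: "real \<Rightarrow> real"
  assumes mono: "strict_mono_on {a<..<b} f" and T: "T \<in> {a<..<b}" and "0 < d"
  obtains \<rho> where "0 < \<rho>" "\<And>t. t \<in> {a<..<b} \<Longrightarrow> \<bar>f t - f T\<bar> < \<rho> \<Longrightarrow> \<bar>t - T\<bar> < d"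
proof -
  define lo hi where "lo = max (T - d/2) ((a + T)/2)" and "hi = min (T + d/2) ((T + b)/2)"
  have lohi: "lo \<in> {a<..<b}" "hi \<in> {a<..<b}" "lo < T" "T < hi"
    using T \<open>0 < d\<close> by (auto simp: lo_def hi_def less_max_iff_disj min_less_iff_disj)
  show thesis
  proof
    show "0 < min (f T - f lo) (f hi - f T)"
      using lohi T strict_mono_onD[OF mono] by auto
    fix t assume t: "t \<in> {a<..<b}" and close: "\<bar>f t - f T\<bar> < min (f T - f lo) (f hi - f T)"
    have "lo < t" "t < hi"
      using close strict_mono_on_leD[OF mono t lohi(1)] strict_mono_on_leD[OF mono lohi(2) t]
      by (fastforce simp: not_less[symmetric])+
    then show "\<bar>t - T\<bar> < d" by (auto simp: lo_def hi_def)
  qed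
qed

lemma compact_small_values_near_zeros:
  fixes f :: "'a::metric_space \<Rightarrow> real"
  assumes "compact K" "continuous_on K f" "open U" "\<And>q. q \<in> K \<Longrightarrow> f q = 0 \<Longrightarrow> q \<in> U"
  obtains \<epsilon> where "0 < \<epsilon>" "\<And>q. q \<in> K \<Longrightarrow> \<bar>f q\<bar> < \<epsilon> \<Longrightarrow> q \<in> U"
proof (cases "K - U = {}")
  case True
  then show thesis using that[of 1] by auto
next
  case False
  have "compact (K - U)" using assms by (intro compact_diff)
  moreover have "continuous_on (K - U) (\<lambda>q. \<bar>f q\<bar>)"
    using assms(2) by (intro continuous_intros) (rule continuous_on_subset, auto)
  ultimately obtain m where m: "m \<in> K - U" "\<And>q. q \<in> K - U \<Longrightarrow> \<bar>f m\<bar> \<le> \<bar>f q\<bar>"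
    using continuous_attains_inf[OF _ False] by blast
  show thesis
  proof (rule that[of "\<bar>f m\<bar>"])
    show "0 < \<bar>f m\<bar>" using m(1) assms(4) by auto
  qed (use m(2) in force)
qed

lemma infdist_less_ex:
  fixes K :: "'a::heine_borel set"
  assumes "closed K" "K \<noteq> {}" "infdist c K < e"
  obtains q where "q \<in> K" "dist c q < e"
  using infdist_attains_inf[OF assms(1,2), of c] assms(3) by metis

lemma ln_2_gt_3_5: "3/5 < ln (2::real)"
proof -
  have "4/5 \<le> exp (-(1/5::real))" using exp_ge_add_one_self[of "-(1/5)"] by simp
  then have "(4/5::real)^3 \<le> exp (-(1/5::real))^3" by (rule power_mono) simp
  also have "\<dots> = exp (-(3/5))" by (simp flip: exp_of_nat_mult)
  finally have "exp (3/5::real) \<le> 125/64" by (simp add: exp_minus field_simps)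
  then have "exp (3/5::real) < exp (ln 2)" by simp
  then show ?thesis by (simp only: exp_less_cancel_iff)
qed

lemma bounded_linear_fX: "bounded_linear (\<lambda>v. fX A C H \<Lambda> v - fX A C H \<Lambda> 0)"
  unfolding linear_conv_bounded_linear[symmetric]
  by (rule linearI) (auto simp: fX_def zero_prod_def algebra_simps split: prod.splits)

lemma bounded_linear_Sinv: "bounded_linear Sinv"
  unfolding linear_conv_bounded_linear[symmetric]
  by (rule linearI) (auto simp: Sinv_def split: prod.splits)

lemma transversal_iff: "transversal A C H \<Lambda> p \<longleftrightarrow> (\<exists>x y. p = (x, y, 0) \<and> 0 < x * y)"
  by (cases p) (auto simp: transversal_def zc_def fX_def fY_def mult.commute)

lemma Sinv_Sinv [simp]: "Sinv (Sinv p) = p"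
  by (cases p) (simp add: Sinv_def)

lemma zc_Sinv [simp]: "zc (Sinv p) = - zc p"
  by (cases p) (simp add: Sinv_def zc_def)

lemma Sinv_fY: "Sinv (fY A C H \<Lambda> p) = fX A C H \<Lambda> (Sinv p)"
  by (cases p) (simp add: Sinv_def fX_def fY_def algebra_simps)

lemma Sinv_fX: "Sinv (fX A C H \<Lambda> p) = fY A C H \<Lambda> (Sinv p)"
  by (metis Sinv_Sinv Sinv_fY)

lemma Sinv_fX_solution:
  assumes "(\<phi> has_vector_derivative fX A C H \<Lambda> (\<phi> t)) F"
  shows "((\<lambda>t. Sinv (\<phi> t)) has_vector_derivative fY A C H \<Lambda> (Sinv (\<phi> t))) F"
  using bounded_linear.has_vector_derivative[OF bounded_linear_Sinv assms] by (simp only: Sinv_fX)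

lemma Sinv_fY_solution:
  assumes "(\<psi> has_vector_derivative fY A C H \<Lambda> (\<psi> t)) F"
  shows "((\<lambda>t. Sinv (\<psi> t)) has_vector_derivative fX A C H \<Lambda> (Sinv (\<psi> t))) F"
  using bounded_linear.has_vector_derivative[OF bounded_linear_Sinv assms] by (simp only: Sinv_fY)

lemma dist_Sinv [simp]: "dist (Sinv p) (Sinv q) = dist p q"
  by (cases p; cases q) (simp add: Sinv_def dist_Pair_Pair dist_real_def abs_minus_commute add_ac)

lemma dist_y_le: "\<bar>fst (snd p) - fst (snd q)\<bar> \<le> dist p q"
  using dist_fst_le[of "snd p" "snd q"] dist_snd_le[of p q] by (simp add: dist_real_def)

lemma dist_zc_le: "\<bar>zc p - zc q\<bar> \<le> dist p q"
  using dist_snd_le[of "snd p" "snd q"] dist_snd_le[of p q] by (simp add: dist_real_def zc_def)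

locale resonant =
  fixes C H :: real
begin

abbreviation "X \<equiv> fX (-2*C) C H (-(1 + C^2))"
abbreviation "Y \<equiv> fY (-2*C) C H (-(1 + C^2))"

definition zX :: "real \<Rightarrow> real \<Rightarrow> real" where
  "zX b t = -1 + exp (C*t) * cos t + (b - C) * exp (C*t) * sin t"

definition yX :: "real \<Rightarrow> real \<Rightarrow> real" where
  "yX b t = exp (C*t) * (b * cos t + (C*b - C^2 - 1) * sin t) - 2*C * zX b t"

definition xX :: "real \<Rightarrow> real \<Rightarrow> real \<Rightarrow> real" where
  "xX a b t = exp (-(2*C*t)) * a
     + H * (4*C * (1 - exp (-(2*C*t))) - exp (C*t) * (3*C * cos t + sin t) + 3*C * exp (-(2*C*t))
       - (b - C) * (exp (C*t) * (3*C * sin t - cos t) + exp (-(2*C*t))))"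

definition flowX :: "real \<Rightarrow> real \<Rightarrow> real \<Rightarrow> pt" where
  "flowX a b t = (xX a b t, yX b t, zX b t)"

lemma flowX_0 [simp]: "flowX a b 0 = (a, b, 0)"
  by (simp add: flowX_def xX_def yX_def zX_def)

lemma zc_flowX [simp]: "zc (flowX a b t) = zX b t"
  by (simp add: flowX_def zc_def)

lemma flowX_solves: "(flowX a b has_vector_derivative X (flowX a b t)) (at t within S)"
proof -
  have "(zX b has_real_derivative yX b t + 2*C * zX b t) (at t within S)"
    unfolding zX_def yX_def
    by (rule derivative_eq_intros refl | simp)+ (simp add: algebra_simps power2_eq_square)
  moreover have "(yX b has_real_derivative -(1 + C^2) - (1 + C^2) * zX b t) (at t within S)"
    unfolding zX_def yX_def
    by (rule derivative_eq_intros refl | simp)+ (simp add: algebra_simps power2_eq_square)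
  moreover have "(xX a b has_real_derivative
      (-2*C) * xX a b t - H * (((-2*C - C)^2 + 1) * zX b t - (-(1 + C^2)))) (at t within S)"
    unfolding zX_def xX_def
    by (rule derivative_eq_intros refl | simp)+ (simp add: algebra_simps power2_eq_square)
  ultimately show ?thesis
    unfolding flowX_def fX_def
    by (auto intro!: has_vector_derivative_Pair simp: has_real_derivative_iff_has_vector_derivative)
qed

lemma X_solution_eq_flowX:
  assumes "\<phi> 0 = (a, b, 0)"
    and "\<And>t. t \<in> {0..T} \<Longrightarrow> (\<phi> has_vector_derivative X (\<phi> t)) (at t within {0..T})"
    and "t \<in> {0..T}"
  shows "\<phi> t = flowX a b t"
  by (rule affine_ode_unique[OF bounded_linear_fX]) (use assms flowX_solves in auto)

lemma continuous_on_flowX: "continuous_on S (flowX a b)"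
  using flowX_solves
  by (meson continuous_at_imp_continuous_on has_vector_derivative_continuous)

definition b_of :: "real \<Rightarrow> real" where
  "b_of t = (exp (-(C*t)) - cos t) / sin t + C"

definition b_of' :: "real \<Rightarrow> real" where
  "b_of' t = (1 - exp (-(C*t)) * (cos t + C * sin t)) / (sin t)^2"

lemma zX_eq: "sin t \<noteq> 0 \<Longrightarrow> zX b t = exp (C*t) * sin t * (b - b_of t)"
  by (simp add: zX_def b_of_def field_simps exp_minus_inverse)

lemma b_of_deriv: "sin t \<noteq> 0 \<Longrightarrow> (b_of has_real_derivative b_of' t) (at t within S)"
  unfolding b_of_def b_of'_def
  by (rule derivative_eq_intros refl | simp)+ (simp add: field_simps power2_eq_square)

lemma b_of'_pos:
  assumes "0 < t" "t < pi"
  shows "0 < b_of' t"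
proof -
  define N where "N t = 1 - exp (-(C*t)) * (cos t + C * sin t)" for t
  have N': "(N has_real_derivative (1 + C^2) * exp (-(C*x)) * sin x) (at x)" for x
    unfolding N_def
    by (rule derivative_eq_intros refl | simp)+ (simp add: algebra_simps power2_eq_square)
  have "N 0 < N t"
  proof (rule DERIV_pos_imp_increasing_open[of 0 t N])
    fix x assume "0 < x" "x < t"
    then have "0 < sin x" using assms by (intro sin_gt_zero) auto
    then show "\<exists>y. DERIV N x :> y \<and> 0 < y"
      using N'[of x]
      by (intro exI[of _ "(1 + C^2) * exp (-(C*x)) * sin x"]) (auto intro!: mult_pos_pos add_pos_nonneg)
  qed (use assms N' in \<open>auto intro!: continuous_at_imp_continuous_on DERIV_isCont\<close>)
  then show ?thesis
    using assms sin_gt_zero[of t] by (simp add: N_def b_of'_def)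
qed

lemma b_of_strict_mono: "strict_mono_on {0<..<pi} b_of"
proof (rule strict_mono_onI)
  fix s t assume "s \<in> {0<..<pi}" "t \<in> {0<..<pi}" "s < t"
  then show "b_of s < b_of t"
  proof (intro DERIV_pos_imp_increasing[OF \<open>s < t\<close>])
    fix x assume "s \<le> x" "x \<le> t"
    with \<open>s \<in> {0<..<pi}\<close> \<open>t \<in> {0<..<pi}\<close> have "0 < x" "x < pi" by auto
    then show "\<exists>y. DERIV b_of x :> y \<and> 0 < y"
      using b_of_deriv[of x] b_of'_pos[of x] sin_gt_zero[of x] by auto
  qed
qed

lemma b_of_pos:
  assumes "0 < t" "t < pi"
  shows "0 < b_of t"
proof -
  define P where "P t = exp (C*t) * (cos t - C * sin t)" for t
  have P': "(P has_real_derivative -((1 + C^2) * exp (C*x) * sin x)) (at x)" for x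
    unfolding P_def
    by (rule derivative_eq_intros refl | simp)+ (simp add: algebra_simps power2_eq_square)
  have "P t < P 0"
  proof (rule DERIV_neg_imp_decreasing_open[of 0 t P])
    fix x assume "0 < x" "x < t"
    then have "0 < sin x" using assms by (intro sin_gt_zero) auto
    then show "\<exists>y. DERIV P x :> y \<and> y < 0"
      using P'[of x]
      by (intro exI[of _ "-((1 + C^2) * exp (C*x) * sin x)"]) (auto intro!: mult_pos_pos add_pos_nonneg)
  qed (use assms P' in \<open>auto intro!: continuous_at_imp_continuous_on DERIV_isCont\<close>)
  then have "zX 0 t < 0" by (simp add: P_def zX_def algebra_simps)
  moreover have "0 < exp (C*t) * sin t" using sin_gt_zero[OF assms] by simp
  ultimately have "0 < exp (C*t) * sin t * b_of t"
    using zX_eq[of t 0] sin_gt_zero[OF assms] by simp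
  then show ?thesis by (rule zero_less_mult_pos) fact
qed

lemma zX_pos:
  assumes "0 < t" "t < T" "T < pi"
  shows "0 < zX (b_of T) t"
proof -
  have "0 < sin t" using assms by (intro sin_gt_zero) auto
  moreover have "b_of t < b_of T"
    using assms by (intro strict_mono_onD[OF b_of_strict_mono]) auto
  ultimately show ?thesis by (simp add: zX_eq)
qed

lemma first_return:
  assumes T: "0 < T" and nonneg: "\<forall>t\<in>{0..T}. 0 \<le> zX b t" and "zX b T = 0"
  shows "T < pi" "b = b_of T"
proof -
  have "zX b pi = -1 - exp (C*pi)" by (simp add: zX_def)
  then have "zX b pi < 0" using exp_gt_zero[of "C*pi"] by linarith
  with nonneg show "T < pi"
    by (metis atLeastAtMost_iff not_less pi_ge_zero)
  then have "0 < sin T" using T by (intro sin_gt_zero)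
  then have "exp (C*T) * sin T * (b - b_of T) = 0"
    using \<open>zX b T = 0\<close> zX_eq[of T b] by simp
  with \<open>0 < sin T\<close> show "b = b_of T" by simp
qed

lemma zX_b_of_nonneg:
  assumes "0 \<le> t" "t \<le> T" "0 < T" "T < pi"
  shows "0 \<le> zX (b_of T) t"
proof -
  have "zX (b_of T) T = 0" using assms sin_gt_zero[of T] by (simp add: zX_eq)
  moreover have "zX b 0 = 0" for b by (simp add: zX_def)
  ultimately show ?thesis
    using zX_pos[of t T] assms by (cases "t = 0 \<or> t = T") (auto simp: less_le)
qed

definition a_of :: "real \<Rightarrow> real" where
  "a_of t = - exp (C*t) * (b_of t * cos t + (C * b_of t - C^2 - 1) * sin t)"

definition x_drift :: "real \<Rightarrow> real" where
  "x_drift t = 4*C * (1 - exp (-(2*C*t))) - exp (C*t) * (3*C * cos t + sin t) + 3*C * exp (-(2*C*t))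
     - (b_of t - C) * (exp (C*t) * (3*C * sin t - cos t) + exp (-(2*C*t)))"

lemma flowX_return:
  assumes "0 < t" "t < pi"
  shows "flowX a (b_of t) t = (exp (-(2*C*t)) * a + H * x_drift t, - a_of t, 0)"
proof -
  have "zX (b_of t) t = 0" using assms sin_gt_zero[of t] by (simp add: zX_eq)
  then show ?thesis by (simp add: flowX_def xX_def yX_def x_drift_def a_of_def)
qed

lemma X_arc:
  assumes T: "0 < T" and init: "\<phi> 0 = (a, b, 0)"
    and \<phi>': "\<And>t. t \<in> {0..T} \<Longrightarrow> (\<phi> has_vector_derivative X (\<phi> t)) (at t within {0..T})"
    and above: "\<forall>t\<in>{0..T}. 0 \<le> zc (\<phi> t)" and hit: "zc (\<phi> T) = 0"
  shows "T < pi" "b = b_of T" "\<forall>t\<in>{0..T}. \<phi> t = flowX a b t"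
    "\<phi> T = (exp (-(2*C*T)) * a + H * x_drift T, - a_of T, 0)"
proof -
  show \<phi>_eq: "\<forall>t\<in>{0..T}. \<phi> t = flowX a b t"
    using X_solution_eq_flowX[OF init \<phi>'] by blast
  have "\<forall>t\<in>{0..T}. 0 \<le> zX b t" "zX b T = 0"
    using above hit \<phi>_eq T by auto
  then show "T < pi" "b = b_of T" using first_return[OF T] by auto
  then show "\<phi> T = (exp (-(2*C*T)) * a + H * x_drift T, - a_of T, 0)"
    using \<phi>_eq T flowX_return[of T a] by auto
qed

lemma Y_arc:
  assumes T: "0 < T" and init: "\<psi> 0 = (x, y, 0)"
    and \<psi>': "\<And>t. t \<in> {0..T} \<Longrightarrow> (\<psi> has_vector_derivative Y (\<psi> t)) (at t within {0..T})"
    and below: "\<forall>t\<in>{0<..<T}. zc (\<psi> t) < 0" and hit: "zc (\<psi> T) = 0"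
  shows "T < pi" "- x = b_of T" "\<forall>t\<in>{0..T}. \<psi> t = Sinv (flowX (- y) (- x) t)"
    "\<psi> T = Sinv (exp (-(2*C*T)) * (- y) + H * x_drift T, - a_of T, 0)"
proof -
  define \<eta> where "\<eta> t = Sinv (\<psi> t)" for t
  have "\<eta> 0 = (- y, - x, 0)" using init by (simp add: \<eta>_def Sinv_def)
  moreover have "(\<eta> has_vector_derivative X (\<eta> t)) (at t within {0..T})" if "t \<in> {0..T}" for t
    unfolding \<eta>_def using Sinv_fY_solution \<psi>' that by blast
  moreover have "0 \<le> zc (\<eta> t)" if "t \<in> {0..T}" for t
  proof -
    have "zc (\<psi> 0) = 0" using init by (simp add: zc_def)
    then show ?thesis
      using that below hit by (cases "t = 0 \<or> t = T") (auto simp: \<eta>_def less_imp_le)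
  qed
  moreover have "zc (\<eta> T) = 0" using hit by (simp add: \<eta>_def)
  ultimately have "T < pi" "- x = b_of T" "\<forall>t\<in>{0..T}. \<eta> t = flowX (- y) (- x) t"
    "\<eta> T = (exp (-(2*C*T)) * (- y) + H * x_drift T, - a_of T, 0)"
    using X_arc[OF T, of \<eta>] by auto
  moreover have "\<psi> t = Sinv (\<eta> t)" for t by (simp add: \<eta>_def)
  ultimately show "T < pi" "- x = b_of T" "\<forall>t\<in>{0..T}. \<psi> t = Sinv (flowX (- y) (- x) t)"
    "\<psi> T = Sinv (exp (-(2*C*T)) * (- y) + H * x_drift T, - a_of T, 0)"
    by auto
qed

text \<open>\<open>closing t1 t2 = 0\<close> is the condition for the X-arc of duration \<open>t1\<close> from
  \<open>(a_of t2, b_of t1, 0)\<close> to end at \<open>Sinv (a_of t1, b_of t2, 0)\<close>.\<close>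
definition closing :: "real \<Rightarrow> real \<Rightarrow> real" where
  "closing s t = b_of t + exp (-(2*C * s)) * a_of t + H * x_drift s"

definition closing_times :: "real \<Rightarrow> real \<Rightarrow> bool" where
  "closing_times t1 t2 \<longleftrightarrow> t1 \<in> {0<..<pi} \<and> t2 \<in> {0<..<pi} \<and> closing t1 t2 = 0 \<and> closing t2 t1 = 0"

lemma closing_times_commute: "closing_times t1 t2 \<longleftrightarrow> closing_times t2 t1"
  by (auto simp: closing_times_def)

lemma flowX_closing_end:
  assumes "closing_times t1 t2"
  shows "flowX (a_of t2) (b_of t1) t1 = Sinv (a_of t1, b_of t2, 0)"
proof -
  have "exp (-(2*C*t1)) * a_of t2 + H * x_drift t1 = - b_of t2"
    using assms by (simp add: closing_times_def closing_def algebra_simps)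
  then show ?thesis
    using assms by (simp add: closing_times_def flowX_return Sinv_def)
qed

definition orbit :: "real \<Rightarrow> real \<Rightarrow> pt set" where
  "orbit t1 t2 =
    flowX (a_of t2) (b_of t1) ` {0..t1} \<union> (\<lambda>t. Sinv (flowX (a_of t1) (b_of t2) t)) ` {0..t2}"

lemma Sinv_image_orbit: "Sinv ` orbit t1 t2 = orbit t2 t1"
  unfolding orbit_def image_Un image_image by auto

lemma compact_orbit: "compact (orbit t1 t2)"
  unfolding orbit_def
  by (intro compact_Un compact_continuous_image continuous_on_flowX compact_Icc
      continuous_on_compose2[OF linear_continuous_on[OF bounded_linear_Sinv]]) auto

lemma corners_in_orbit:
  assumes "0 \<le> t1" "0 \<le> t2"
  shows "(a_of t2, b_of t1, 0) \<in> orbit t1 t2" "Sinv (a_of t1, b_of t2, 0) \<in> orbit t1 t2"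
  unfolding orbit_def using assms by (force simp flip: flowX_0)+

lemma orbit_zc_eq_0:
  assumes "closing_times t1 t2" "q \<in> orbit t1 t2" "zc q = 0"
  shows "q = (a_of t2, b_of t1, 0) \<or> q = Sinv (a_of t1, b_of t2, 0)"
proof -
  have times: "0 < t1" "t1 < pi" "0 < t2" "t2 < pi" using assms(1) by (auto simp: closing_times_def)
  have ends: "\<tau> = 0 \<or> \<tau> = T" if "\<tau> \<in> {0..T}" "zX (b_of T) \<tau> = 0" "T < pi" for \<tau> T
    using zX_pos[of \<tau> T] that by force
  from assms(2) consider
      \<tau> where "\<tau> \<in> {0..t1}" "q = flowX (a_of t2) (b_of t1) \<tau>"
    | \<tau> where "\<tau> \<in> {0..t2}" "q = Sinv (flowX (a_of t1) (b_of t2) \<tau>)"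
    unfolding orbit_def by blast
  then show ?thesis
  proof cases
    case 1
    then have "\<tau> = 0 \<or> \<tau> = t1" using ends[of \<tau> t1] assms(3) times by auto
    then show ?thesis using 1 flowX_closing_end[OF assms(1)] by auto
  next
    case 2
    then have "\<tau> = 0 \<or> \<tau> = t2" using ends[of \<tau> t2] assms(3) times by auto
    then show ?thesis
      using 2 flowX_closing_end[of t2 t1] assms(1) by (auto simp: closing_times_commute)
  qed
qed

lemma orbit_is_crossing_periodic_orbit:
  assumes times: "closing_times t1 t2" and pos: "0 < a_of t1" "0 < a_of t2"
  shows "crossing_periodic_orbit (-2*C) C H (-(1 + C^2)) (orbit t1 t2)"
proof -
  have t: "0 < t1" "t1 < pi" "0 < t2" "t2 < pi" using times by (auto simp: closing_times_def)
  show ?thesis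
    unfolding crossing_periodic_orbit_def orbit_def
  proof (rule exI[of _ "(a_of t2, b_of t1, 0)"], rule exI[of _ "Sinv (a_of t1, b_of t2, 0)"],
      rule exI[of _ t1], rule exI[of _ t2], rule exI[of _ "flowX (a_of t2) (b_of t1)"],
      rule exI[of _ "\<lambda>t. Sinv (flowX (a_of t1) (b_of t2) t)"], intro conjI ballI)
    show "flowX (a_of t2) (b_of t1) t1 = Sinv (a_of t1, b_of t2, 0)"
      by (rule flowX_closing_end[OF times])
    show "Sinv (flowX (a_of t1) (b_of t2) t2) = (a_of t2, b_of t1, 0)"
      using flowX_closing_end[of t2 t1] times by (simp add: closing_times_commute)
    fix t
    show "(flowX (a_of t2) (b_of t1) has_vector_derivative X (flowX (a_of t2) (b_of t1) t))
        (at t within {0..t1})"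
      by (rule flowX_solves)
    show "((\<lambda>t. Sinv (flowX (a_of t1) (b_of t2) t)) has_vector_derivative
        Y (Sinv (flowX (a_of t1) (b_of t2) t))) (at t within {0..t2})"
      by (rule Sinv_fX_solution[OF flowX_solves])
    show "t \<in> {0..t1} \<Longrightarrow> 0 \<le> zc (flowX (a_of t2) (b_of t1) t)"
      using zX_b_of_nonneg t by simp
    show "t \<in> {0<..<t2} \<Longrightarrow> zc (Sinv (flowX (a_of t1) (b_of t2) t)) < 0"
      using zX_pos t by simp
  next
    show "transversal (-2*C) C H (-(1 + C^2)) (a_of t2, b_of t1, 0)"
      "transversal (-2*C) C H (-(1 + C^2)) (Sinv (a_of t1, b_of t2, 0))"
      using pos b_of_pos t by (simp_all add: transversal_iff Sinv_def)
  qed (use t in auto)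
qed

lemma crossing_periodic_orbitE:
  assumes "crossing_periodic_orbit (-2*C) C H (-(1 + C^2)) G"
  obtains t1 t2 where "closing_times t1 t2" "0 < a_of t1" "0 < a_of t2" "G = orbit t1 t2"
proof -
  obtain p0 p1 t1 t2 \<phi> \<psi> where t: "0 < t1" "0 < t2"
    and ends: "\<phi> 0 = p0" "\<phi> t1 = p1" "\<psi> 0 = p1" "\<psi> t2 = p0"
    and \<phi>': "\<forall>t\<in>{0..t1}. (\<phi> has_vector_derivative X (\<phi> t)) (at t within {0..t1})"
    and \<psi>': "\<forall>t\<in>{0..t2}. (\<psi> has_vector_derivative Y (\<psi> t)) (at t within {0..t2})"
    and above: "\<forall>t\<in>{0..t1}. 0 \<le> zc (\<phi> t)" and below: "\<forall>t\<in>{0<..<t2}. zc (\<psi> t) < 0"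
    and tr0: "transversal (-2*C) C H (-(1 + C^2)) p0"
    and tr1: "transversal (-2*C) C H (-(1 + C^2)) p1"
    and G: "G = \<phi> ` {0..t1} \<union> \<psi> ` {0..t2}"
    using assms unfolding crossing_periodic_orbit_def by blast
  obtain a b where p0: "p0 = (a, b, 0)" and "0 < a * b"
    using tr0 by (auto simp: transversal_iff)
  obtain x1 y1 where p1: "p1 = (x1, y1, 0)" and "0 < x1 * y1"
    using tr1 by (auto simp: transversal_iff)
  have first: "t1 < pi" "b = b_of t1" "\<forall>t\<in>{0..t1}. \<phi> t = flowX a b t"
      "p1 = (exp (-(2*C*t1)) * a + H * x_drift t1, - a_of t1, 0)"
    using X_arc[OF \<open>0 < t1\<close> _ \<phi>'[rule_format] above] ends p0 p1 by (simp_all add: zc_def)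
  then have x1: "x1 = exp (-(2*C*t1)) * a + H * x_drift t1" and y1: "y1 = - a_of t1"
    using p1 by auto
  have second: "t2 < pi" "- x1 = b_of t2" "\<forall>t\<in>{0..t2}. \<psi> t = Sinv (flowX (- y1) (- x1) t)"
      "p0 = Sinv (exp (-(2*C*t2)) * (- y1) + H * x_drift t2, - a_of t2, 0)"
    using Y_arc[OF \<open>0 < t2\<close> _ \<psi>'[rule_format] below] ends p0 p1 by (simp_all add: zc_def)
  then have a: "a = a_of t2" and b: "b = - (exp (-(2*C*t2)) * a_of t1 + H * x_drift t2)"
    using p0 y1 by (auto simp: Sinv_def)
  have "closing_times t1 t2"
    using t first second a b x1 by (simp add: closing_times_def closing_def)
  moreover have "0 < a_of t2"
  proof -
    have "0 < b" using first(1,2) b_of_pos t by simp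
    then show ?thesis using zero_less_mult_pos2[OF \<open>0 < a * b\<close>] a by simp
  qed
  moreover have "0 < a_of t1"
  proof -
    have "0 < b_of t2 * a_of t1" using \<open>0 < x1 * y1\<close> second(2)[symmetric] y1 by simp
    then show ?thesis using zero_less_mult_pos b_of_pos second(1) t by blast
  qed
  moreover have "G = orbit t1 t2"
    using first(2,3) second(2,3) a y1 by (auto simp: G orbit_def)
  ultimately show thesis using that by blast
qed

lemma crossing_periodic_orbit_iff:
  "crossing_periodic_orbit (-2*C) C H (-(1 + C^2)) G \<longleftrightarrow>
    (\<exists>t1 t2. closing_times t1 t2 \<and> 0 < a_of t1 \<and> 0 < a_of t2 \<and> G = orbit t1 t2)"
  using crossing_periodic_orbitE orbit_is_crossing_periodic_orbit by blast

definition a_of' :: "real \<Rightarrow> real" where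
  "a_of' t = - (C * exp (C*t) * (b_of t * cos t + (C * b_of t - C^2 - 1) * sin t)
     + exp (C*t) * (- b_of t * sin t + (C * b_of t - C^2 - 1) * cos t)
     + exp (C*t) * (cos t + C * sin t) * b_of' t)"

definition x_drift' :: "real \<Rightarrow> real" where
  "x_drift' t = 8*C^2 * exp (-(2*C*t))
     - (C * exp (C*t) * (3*C * cos t + sin t) + exp (C*t) * (-3*C * sin t + cos t))
     - 6*C^2 * exp (-(2*C*t)) - b_of' t * (exp (C*t) * (3*C * sin t - cos t) + exp (-(2*C*t)))
     - (b_of t - C) * (C * exp (C*t) * (3*C * sin t - cos t) + exp (C*t) * (3*C * cos t + sin t)
        - 2*C * exp (-(2*C*t)))"

lemma a_of_deriv: "sin t \<noteq> 0 \<Longrightarrow> (a_of has_real_derivative a_of' t) (at t within S)"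
  unfolding a_of_def a_of'_def
  by (rule derivative_eq_intros DERIV_chain2[OF b_of_deriv] refl | simp)+
    (simp add: algebra_simps power2_eq_square)

lemma x_drift_deriv: "sin t \<noteq> 0 \<Longrightarrow> (x_drift has_real_derivative x_drift' t) (at t within S)"
  unfolding x_drift_def x_drift'_def
  by (rule derivative_eq_intros DERIV_chain2[OF b_of_deriv] refl | simp)+
    (simp add: algebra_simps power2_eq_square)

lemma closing_has_derivative:
  assumes "sin u \<noteq> 0" "sin v \<noteq> 0"
  shows "((\<lambda>(u, v). closing u v) has_derivative
    (\<lambda>(h, k). (H * x_drift' u - 2*C * exp (-(2*C*u)) * a_of v) * h
      + (b_of' v + exp (-(2*C*u)) * a_of' v) * k)) (at (u, v))"
proof -
  have fst: "(fst has_derivative fst) (at (u, v))" and snd: "(snd has_derivative snd) (at (u, v))"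
    by (simp_all add: bounded_linear_imp_has_derivative bounded_linear_fst bounded_linear_snd)
  have b: "((\<lambda>p. b_of (snd p)) has_derivative (\<lambda>p. snd p * b_of' v)) (at (u, v))"
    by (rule DERIV_compose_FDERIV[OF _ snd]) (simp add: b_of_deriv assms)
  have a: "((\<lambda>p. a_of (snd p)) has_derivative (\<lambda>p. snd p * a_of' v)) (at (u, v))"
    by (rule DERIV_compose_FDERIV[OF _ snd]) (simp add: a_of_deriv assms)
  have x: "((\<lambda>p. x_drift (fst p)) has_derivative (\<lambda>p. fst p * x_drift' u)) (at (u, v))"
    by (rule DERIV_compose_FDERIV[OF _ fst]) (simp add: x_drift_deriv assms)
  have e: "((\<lambda>p. exp (-(2*C * fst p))) has_derivative (\<lambda>p. fst p * (exp (-(2*C*u)) * (-(2*C)))))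
      (at (u, v))"
    by (rule DERIV_compose_FDERIV[OF _ fst]) (auto intro!: derivative_eq_intros)
  from has_derivative_add[OF has_derivative_add[OF b has_derivative_mult[OF e a]]
      has_derivative_mult_right[OF x]]
  show ?thesis
    unfolding closing_def split_def
    by (rule has_derivative_eq_rhs) (simp add: fun_eq_iff algebra_simps)
qed

lemma isCont_b_of: "sin t \<noteq> 0 \<Longrightarrow> isCont b_of t"
  using b_of_deriv DERIV_isCont by blast

lemma isCont_b_of': "sin t \<noteq> 0 \<Longrightarrow> isCont b_of' t"
  unfolding b_of'_def by (intro continuous_intros) auto

lemma isCont_a_of: "sin t \<noteq> 0 \<Longrightarrow> isCont a_of t"
  using a_of_deriv DERIV_isCont by blast

lemma isCont_a_of': "sin t \<noteq> 0 \<Longrightarrow> isCont a_of' t"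
  unfolding a_of'_def by (intro continuous_intros isCont_b_of isCont_b_of')

lemma isCont_x_drift': "sin t \<noteq> 0 \<Longrightarrow> isCont x_drift' t"
  unfolding x_drift'_def by (intro continuous_intros isCont_b_of isCont_b_of')

end

locale resonant_symmetric = resonant +
  assumes exp_C: "exp (C * (pi/2)) = 2"
    and H_eq: "H = (8 + 6*C) / (17 - 6*C)"
begin

lemma C_bounds: "3/10 < C" "C < 1"
proof -
  have C: "C = 2 * ln 2 / pi"
    using arg_cong[OF exp_C, of ln] by (simp add: field_simps)
  have "3/10 < 2 * ln 2 / (4::real)" using ln_2_gt_3_5 by simp
  also have "\<dots> < 2 * ln 2 / pi" using pi_less_4 ln_2_gt_3_5 by (intro divide_strict_left_mono) auto
  finally show "3/10 < C" by (simp add: C)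
  have "2 * ln 2 / pi \<le> 2 * ln 2 / (2::real)"
    using pi_ge_two ln_2_gt_3_5 by (intro divide_left_mono) auto
  also have "\<dots> < 1" using ln_2_less_1 by simp
  finally show "C < 1" by (simp add: C)
qed

lemma H_mult: "H * (17 - 6*C) = 8 + 6*C"
  using C_bounds by (simp add: H_eq)

lemma H_pos: "0 < H"
  using C_bounds by (simp add: H_eq)

lemma exp_at_half_pi: "exp (-(C * (pi/2))) = 1/2" "exp (-(2*C * (pi/2))) = 1/4"
proof -
  show "exp (-(C * (pi/2))) = 1/2" by (simp only: exp_minus exp_C) simp
  have "exp (2*C * (pi/2)) = exp (C * (pi/2) + C * (pi/2))" by (simp add: algebra_simps)
  then have "exp (2*C * (pi/2)) = 4" by (simp only: exp_add exp_C)
  then show "exp (-(2*C * (pi/2))) = 1/4" by (simp only: exp_minus) simp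
qed

lemma values_at_half_pi:
  "b_of (pi/2) = 1/2 + C" "b_of' (pi/2) = 1 - C/2" "a_of (pi/2) = 2 - C" "a_of' (pi/2) = 2*C + 1"
  "x_drift (pi/2) = 3*C/4 - 17/8" "x_drift' (pi/2) = C^2/2 - 13*C/8 - 5/4"
  by (simp only: b_of_def b_of'_def a_of_def a_of'_def x_drift_def x_drift'_def exp_C exp_at_half_pi
      sin_pi_half cos_pi_half; simp add: algebra_simps power2_eq_square)+

lemma closing_half_pi: "closing (pi/2) (pi/2) = 0"
proof -
  have "closing (pi/2) (pi/2) = 1 + 3*C/4 - H * (17 - 6*C) / 8"
    by (simp only: closing_def values_at_half_pi exp_at_half_pi) (simp add: field_simps)
  then show ?thesis by (simp add: H_mult)
qed

lemma a_of_slope_pos_at_half_pi: "0 < a_of' (pi/2) + 2*C * a_of (pi/2)"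
proof -
  have "C*C < C" using C_bounds by (simp add: mult_less_cancel_left1)
  moreover have "a_of' (pi/2) + 2*C * a_of (pi/2) = 1 + 6*C - 2*(C*C)"
    by (simp add: values_at_half_pi algebra_simps)
  ultimately show ?thesis using C_bounds by linarith
qed

lemma x_drift'_neg_at_half_pi: "x_drift' (pi/2) < 0"
proof -
  have "C^2 < C" using C_bounds by (simp add: power2_eq_square mult_less_cancel_left1)
  then show ?thesis using C_bounds by (simp add: values_at_half_pi)
qed

lemma diagonal_slope_neg_at_half_pi:
  "b_of' (pi/2) + exp (-(2*C*(pi/2))) * (a_of' (pi/2) - 2*C * a_of (pi/2)) + H * x_drift' (pi/2)
    < 0" (is "?D < 0")
proof -
  have "0 < (10*C - 3) * (1 - C)" using C_bounds by (intro mult_pos_pos) auto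
  then have "10*C^2 < 13*C - 3" by (simp add: algebra_simps power2_eq_square)
  then have neg: "70*C^2 - 360*C + 90 < 0" using C_bounds by linarith
  have "?D * (8 * (17 - 6*C))
      = 8 * (17 - 6*C) * ((1 - C/2) + (1/4) * ((2*C + 1) - 2*C * (2 - C)))
        + H * (17 - 6*C) * (4*C^2 - 13*C - 10)"
    by (simp only: values_at_half_pi exp_at_half_pi) (simp add: algebra_simps)
  also have "\<dots> = 70*C^2 - 360*C + 90"
    by (simp only: H_mult) (simp add: algebra_simps power2_eq_square)
  finally have "?D * (8 * (17 - 6*C)) < 0" using neg by simp
  moreover have "0 < 17 - 6*C" using C_bounds by simp
  ultimately show ?thesis by (simp add: mult_less_0_iff)
qed

lemma slopes_near_half_pi:
  obtains d where "0 < d" "\<And>y. y \<in> ball (pi/2) d \<Longrightarrow> y \<in> {0<..<pi} \<and> 0 < a_of' y + 2*C * a_of y \<and>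
    x_drift' y < 0 \<and> b_of' y + exp (-(2*C*y)) * (a_of' y - 2*C * a_of y) + H * x_drift' y < 0"
proof -
  have nhds: "(f \<longlongrightarrow> f (pi/2)) (nhds (pi/2))" if "isCont f (pi/2)" for f :: "real \<Rightarrow> real"
    using isCont_tendsto_compose[OF that filterlim_ident] .
  have "\<forall>\<^sub>F y in nhds (pi/2). y \<in> {0<..<pi}"
    by (rule eventually_nhds_in_open) auto
  moreover have "\<forall>\<^sub>F y in nhds (pi/2). 0 < a_of' y + 2*C * a_of y"
    by (rule order_tendstoD(1)[OF nhds[of "\<lambda>y. a_of' y + 2*C * a_of y"] a_of_slope_pos_at_half_pi])
      (intro continuous_intros isCont_a_of isCont_a_of'; simp)
  moreover have "\<forall>\<^sub>F y in nhds (pi/2). x_drift' y < 0"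
    by (rule order_tendstoD(2)[OF nhds[of x_drift'] x_drift'_neg_at_half_pi])
      (intro isCont_x_drift'; simp)
  moreover have "\<forall>\<^sub>F y in nhds (pi/2).
      b_of' y + exp (-(2*C*y)) * (a_of' y - 2*C * a_of y) + H * x_drift' y < 0"
    by (rule order_tendstoD(2)[OF nhds[of "\<lambda>y. b_of' y + exp (-(2*C*y)) * (a_of' y - 2*C * a_of y)
        + H * x_drift' y"] diagonal_slope_neg_at_half_pi])
      (intro continuous_intros isCont_a_of isCont_a_of' isCont_b_of' isCont_x_drift'; simp)
  ultimately have "\<forall>\<^sub>F y in nhds (pi/2). y \<in> {0<..<pi} \<and> 0 < a_of' y + 2*C * a_of y \<and>
      x_drift' y < 0 \<and> b_of' y + exp (-(2*C*y)) * (a_of' y - 2*C * a_of y) + H * x_drift' y < 0"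
    by eventually_elim blast
  then obtain d where "0 < d" and "\<forall>y. dist y (pi/2) < d \<longrightarrow> y \<in> {0<..<pi} \<and>
      0 < a_of' y + 2*C * a_of y \<and> x_drift' y < 0 \<and>
      b_of' y + exp (-(2*C*y)) * (a_of' y - 2*C * a_of y) + H * x_drift' y < 0"
    unfolding eventually_nhds_metric by blast
  then show thesis by (intro that) (auto simp: dist_commute)
qed

lemma closing_locally_unique:
  obtains d where "0 < d"
    "\<And>s t. s \<in> ball (pi/2) d \<Longrightarrow> t \<in> ball (pi/2) d \<Longrightarrow> closing s t = 0 \<Longrightarrow> closing t s = 0 \<Longrightarrow>
      s = pi/2 \<and> t = pi/2"
proof -
  obtain d where "0 < d" and near: "\<And>y. y \<in> ball (pi/2) d \<Longrightarrow> y \<in> {0<..<pi} \<and>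
      0 < a_of' y + 2*C * a_of y \<and> x_drift' y < 0 \<and>
      b_of' y + exp (-(2*C*y)) * (a_of' y - 2*C * a_of y) + H * x_drift' y < 0"
    using slopes_near_half_pi by blast
  have sin_pos: "0 < sin y" if "y \<in> ball (pi/2) d" for y
    using near[OF that] by (auto intro: sin_gt_zero)
  show thesis
  proof (rule that[OF \<open>0 < d\<close>])
    fix s t assume "s \<in> ball (pi/2) d" "t \<in> ball (pi/2) d" "closing s t = 0" "closing t s = 0"
    then show "s = pi/2 \<and> t = pi/2"
    proof (intro swapped_zeros_unique[where I = "ball (pi/2) d"
          and Eu = "\<lambda>u v. H * x_drift' u - 2*C * exp (-(2*C*u)) * a_of v"
          and Ev = "\<lambda>u v. b_of' v + exp (-(2*C*u)) * a_of' v"])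
      fix u v assume u: "u \<in> ball (pi/2) d" and v: "v \<in> ball (pi/2) d"
      show "((\<lambda>(u, v). closing u v) has_derivative (\<lambda>(h, k).
          (H * x_drift' u - 2*C * exp (-(2*C*u)) * a_of v) * h
          + (b_of' v + exp (-(2*C*u)) * a_of' v) * k)) (at (u, v))"
        using closing_has_derivative sin_pos[OF u] sin_pos[OF v] by simp
      have "0 < b_of' v" using near[OF v] b_of'_pos by auto
      moreover have "0 < exp (-(2*C*u)) * (a_of' v + 2*C * a_of v)" using near[OF v] by simp
      moreover have "H * x_drift' u < 0" using near[OF u] H_pos by (simp add: mult_pos_neg)
      ultimately show
        "H * x_drift' u - 2*C * exp (-(2*C*u)) * a_of v < b_of' v + exp (-(2*C*u)) * a_of' v"
        by (simp add: algebra_simps)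
    next
      fix u assume "u \<in> ball (pi/2) d"
      then show
        "H * x_drift' u - 2*C * exp (-(2*C*u)) * a_of u + (b_of' u + exp (-(2*C*u)) * a_of' u) \<noteq> 0"
        using near by (fastforce simp: algebra_simps)
    qed (use \<open>0 < d\<close> closing_half_pi in auto)
  qed
qed

lemma symmetric_closing_times: "closing_times (pi/2) (pi/2)"
  using closing_half_pi by (simp add: closing_times_def)

lemma symmetric_orbit_crossing:
  "crossing_periodic_orbit (-2*C) C H (-(1 + C^2)) (orbit (pi/2) (pi/2))"
proof -
  have "0 < a_of (pi/2)" using C_bounds by (simp add: values_at_half_pi)
  then show ?thesis unfolding crossing_periodic_orbit_iff using symmetric_closing_times by blast
qed

lemma Sigma_near_symmetric_orbit:
  assumes "0 < \<eta>"
  obtains \<epsilon> where "0 < \<epsilon>" "\<And>c q. zc c = 0 \<Longrightarrow> q \<in> orbit (pi/2) (pi/2) \<Longrightarrow> dist c q < \<epsilon> \<Longrightarrow>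
    dist c (a_of (pi/2), b_of (pi/2), 0) < \<eta> \<or> dist c (Sinv (a_of (pi/2), b_of (pi/2), 0)) < \<eta>"
proof -
  define p :: pt where "p = (a_of (pi/2), b_of (pi/2), 0)"
  define U where "U = ball p (\<eta>/2) \<union> ball (Sinv p) (\<eta>/2)"
  have cont: "continuous_on (orbit (pi/2) (pi/2)) zc"
    unfolding zc_def by (intro continuous_intros)
  have "open U" by (simp add: U_def open_Un)
  have zeros: "q \<in> U" if "q \<in> orbit (pi/2) (pi/2)" "zc q = 0" for q
    using orbit_zc_eq_0[OF symmetric_closing_times that] assms by (auto simp: U_def p_def)
  obtain \<epsilon> where "0 < \<epsilon>" and \<epsilon>: "\<And>q. q \<in> orbit (pi/2) (pi/2) \<Longrightarrow> \<bar>zc q\<bar> < \<epsilon> \<Longrightarrow> q \<in> U"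
    using compact_small_values_near_zeros[OF compact_orbit cont \<open>open U\<close> zeros] by blast
  show thesis
  proof (rule that[of "min \<epsilon> (\<eta>/2)"])
    show "0 < min \<epsilon> (\<eta>/2)" using \<open>0 < \<epsilon>\<close> assms by simp
    fix c q assume "zc c = 0" "q \<in> orbit (pi/2) (pi/2)" and cq: "dist c q < min \<epsilon> (\<eta>/2)"
    then have "\<bar>zc q\<bar> < \<epsilon>" using dist_zc_le[of q c] by (simp add: dist_commute)
    then have "dist p q < \<eta>/2 \<or> dist (Sinv p) q < \<eta>/2"
      using \<epsilon> \<open>q \<in> orbit (pi/2) (pi/2)\<close> by (auto simp: U_def)
    moreover have "dist c p \<le> dist c q + dist p q" "dist c (Sinv p) \<le> dist c q + dist (Sinv p) q"
      using dist_triangle[of c p q] dist_triangle[of c "Sinv p" q] dist_commute[of q p]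
        dist_commute[of q "Sinv p"] by linarith+
    ultimately show
      "dist c (a_of (pi/2), b_of (pi/2), 0) < \<eta> \<or> dist c (Sinv (a_of (pi/2), b_of (pi/2), 0)) < \<eta>"
      using cq unfolding p_def by linarith
  qed
qed

lemma return_time_near_half_pi:
  assumes "0 < d"
  obtains \<epsilon> where "0 < \<epsilon>" "\<And>t c q. t \<in> {0<..<pi} \<Longrightarrow> fst (snd c) = b_of t \<Longrightarrow> zc c = 0 \<Longrightarrow>
    q \<in> orbit (pi/2) (pi/2) \<Longrightarrow> dist c q < \<epsilon> \<Longrightarrow> t \<in> ball (pi/2) d"
proof -
  define p :: pt where "p = (a_of (pi/2), b_of (pi/2), 0)"
  obtain \<rho> where "0 < \<rho>"
    and \<rho>: "\<And>t. t \<in> {0<..<pi} \<Longrightarrow> \<bar>b_of t - b_of (pi/2)\<bar> < \<rho> \<Longrightarrow> \<bar>t - pi/2\<bar> < d"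
    using strict_mono_on_local_inverse[OF b_of_strict_mono _ assms, of "pi/2"] by auto
  have "0 < min \<rho> (a_of (pi/2))" using \<open>0 < \<rho>\<close> C_bounds by (simp add: values_at_half_pi)
  then obtain \<epsilon> where "0 < \<epsilon>" and \<epsilon>: "\<And>c q. zc c = 0 \<Longrightarrow> q \<in> orbit (pi/2) (pi/2) \<Longrightarrow>
      dist c q < \<epsilon> \<Longrightarrow> dist c p < min \<rho> (a_of (pi/2)) \<or> dist c (Sinv p) < min \<rho> (a_of (pi/2))"
    by (rule Sigma_near_symmetric_orbit[folded p_def]) blast
  show thesis
  proof (rule that[OF \<open>0 < \<epsilon>\<close>])
    fix t c q assume t: "t \<in> {0<..<pi}" and c: "fst (snd c) = b_of t" "zc c = 0"
      and q: "q \<in> orbit (pi/2) (pi/2)" "dist c q < \<epsilon>"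
    from \<epsilon>[OF c(2) q] have "\<bar>b_of t - b_of (pi/2)\<bar> < \<rho>"
    proof (elim disjE)
      assume "dist c p < min \<rho> (a_of (pi/2))"
      moreover have "\<bar>b_of t - b_of (pi/2)\<bar> \<le> dist c p"
        using dist_y_le[of c p] c by (simp add: p_def)
      ultimately show ?thesis by linarith
    next
      assume "dist c (Sinv p) < min \<rho> (a_of (pi/2))"
      moreover have "\<bar>b_of t + a_of (pi/2)\<bar> \<le> dist c (Sinv p)"
        using dist_y_le[of c "Sinv p"] c by (simp add: p_def Sinv_def)
      moreover have "0 < b_of t" using b_of_pos t by simp
      ultimately show ?thesis by linarith
    qed
    then show "t \<in> ball (pi/2) d" using \<rho>[OF t] by (simp add: dist_real_def)
  qed
qed

lemma symmetric_orbit_isolated: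
  "\<exists>\<epsilon>>0. \<forall>G. crossing_periodic_orbit (-2*C) C H (-(1 + C^2)) G \<and>
      (\<forall>q\<in>G. infdist q (orbit (pi/2) (pi/2)) < \<epsilon>) \<longrightarrow> G = orbit (pi/2) (pi/2)"
proof -
  obtain d where "0 < d" and unique: "\<And>s t. s \<in> ball (pi/2) d \<Longrightarrow> t \<in> ball (pi/2) d \<Longrightarrow>
      closing s t = 0 \<Longrightarrow> closing t s = 0 \<Longrightarrow> s = pi/2 \<and> t = pi/2"
    using closing_locally_unique by blast
  obtain \<epsilon> where "0 < \<epsilon>" and close: "\<And>t c q. t \<in> {0<..<pi} \<Longrightarrow> fst (snd c) = b_of t \<Longrightarrow> zc c = 0 \<Longrightarrow>
      q \<in> orbit (pi/2) (pi/2) \<Longrightarrow> dist c q < \<epsilon> \<Longrightarrow> t \<in> ball (pi/2) d"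
    using return_time_near_half_pi[OF \<open>0 < d\<close>] by blast
  have nonempty: "orbit (pi/2) (pi/2) \<noteq> {}" using corners_in_orbit[of "pi/2" "pi/2"] by auto
  have "G = orbit (pi/2) (pi/2)" if cpo: "crossing_periodic_orbit (-2*C) C H (-(1 + C^2)) G"
    and near: "\<forall>q\<in>G. infdist q (orbit (pi/2) (pi/2)) < \<epsilon>" for G
  proof -
    obtain t1 t2 where times: "closing_times t1 t2" and G: "G = orbit t1 t2"
      using cpo crossing_periodic_orbit_iff by blast
    then have t: "t1 \<in> {0<..<pi}" "t2 \<in> {0<..<pi}" by (auto simp: closing_times_def)
    have corners: "(a_of t2, b_of t1, 0) \<in> G" "Sinv (a_of t1, b_of t2, 0) \<in> G"
      using corners_in_orbit[of t1 t2] t G by auto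
    have closed: "closed (orbit (pi/2) (pi/2))" by (rule compact_imp_closed[OF compact_orbit])
    obtain q1 where "q1 \<in> orbit (pi/2) (pi/2)" "dist (a_of t2, b_of t1, 0) q1 < \<epsilon>"
      by (rule infdist_less_ex[OF closed nonempty near[rule_format, OF corners(1)]])
    then have "t1 \<in> ball (pi/2) d"
      using close[OF t(1), of "(a_of t2, b_of t1, 0)" q1] by (simp add: zc_def)
    obtain q2 where q2: "q2 \<in> orbit (pi/2) (pi/2)" "dist (Sinv (a_of t1, b_of t2, 0)) q2 < \<epsilon>"
      by (rule infdist_less_ex[OF closed nonempty near[rule_format, OF corners(2)]])
    have "Sinv q2 \<in> orbit (pi/2) (pi/2)"
      using imageI[OF q2(1), of Sinv] by (simp only: Sinv_image_orbit)
    moreover have "dist (a_of t1, b_of t2, 0) (Sinv q2) < \<epsilon>"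
      using q2(2) dist_Sinv[of "Sinv (a_of t1, b_of t2, 0)" q2] by simp
    ultimately have "t2 \<in> ball (pi/2) d"
      using close[OF t(2), of "(a_of t1, b_of t2, 0)" "Sinv q2"] by (simp add: zc_def)
    with \<open>t1 \<in> ball (pi/2) d\<close> have "t1 = pi/2 \<and> t2 = pi/2"
      by (rule unique) (use times in \<open>simp_all add: closing_times_def\<close>)
    then show ?thesis unfolding G by metis
  qed
  then show ?thesis using \<open>0 < \<epsilon>\<close> by blast
qed

end

theorem theorem1:
  shows "\<exists>C H \<Lambda> \<gamma>. (-2 * C) \<noteq> 0 \<and> symmetric_limit_cycle (-2 * C) C H \<Lambda> \<gamma>"
proof -
  define C :: real where "C = 2 * ln 2 / pi"
  define H where "H = (8 + 6*C) / (17 - 6*C)"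
  interpret resonant_symmetric C H
  proof unfold_locales
    have "C * (pi/2) = ln 2" by (simp add: C_def)
    then show "exp (C * (pi/2)) = 2" by simp
  qed (simp add: H_def)
  have "-2 * C \<noteq> 0" using C_bounds by simp
  moreover have "symmetric_limit_cycle (-2 * C) C H (-(1 + C^2)) (orbit (pi/2) (pi/2))"
    unfolding symmetric_limit_cycle_def limit_cycle_def
    using symmetric_orbit_crossing symmetric_orbit_isolated Sinv_image_orbit by blast
  ultimately show ?thesis by blast
qed

end
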